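(* For every integer $m\ge1$ and every partition $\mu\vdash m$ with $\ell(\mu)$ parts, there is a polynomial $\Pi_\mu(q)$ with nonnegative integer coefficients such that $$f_\mu\Big[\frac{1}{1-q}\Big]\,(q;q)_m\;=\;\Pi_\mu(q)\,(q-1)^{m-\ell(\mu)}.$$
   Context: $f_\mu$ denotes the forgotten symmetric function indexed by $\mu$, i.e. the basis dual to the elementary basis $\{e_\mu\}$ under the Hall scalar product (equivalently $f_\mu=\omega m_\mu$). $f_\mu[1/(1-q)]$ denotes the plethystic evaluation of $f_\mu$ at the alphabet $\{1,q,q^2,\dots\}$, i.e. $f_\mu(1,q,q^2,\ldots)$, a rational function of $q$. $(q;q)_m=(1-q)(1-q^2)\cdots(1-q^m)$. *)

theory Defs
  imports "HOL-Analysis.Analysis" "HOL-Library.Multiset" "HOL-Computational_Algebra.Polynomial"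
begin

definition partitions :: "nat \<Rightarrow> nat list set" where
  "partitions n = {xs. sorted (rev xs) \<and> 0 \<notin> set xs \<and> sum_list xs = n}"

text \<open>Monomial symmetric function m_nu evaluated at the (infinite) alphabet x_0, x_1, ...:
  sum of x^alpha over all finitely supported exponent vectors alpha whose multiset of
  nonzero entries equals nu.\<close>
definition msym :: "nat list \<Rightarrow> (nat \<Rightarrow> real) \<Rightarrow> real" where
  "msym nu x = infsum (\<lambda>\<alpha>. \<Prod>i\<in>{i. \<alpha> i \<noteq> 0}. x i ^ \<alpha> i)
      {\<alpha> :: nat \<Rightarrow> nat. finite {i. \<alpha> i \<noteq> 0} \<and>
          image_mset \<alpha> (mset_set {i. \<alpha> i \<noteq> 0}) = mset nu}"

definition hsym :: "nat \<Rightarrow> (nat \<Rightarrow> real) \<Rightarrow> real" where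
  "hsym k x = (\<Sum>nu\<in>partitions k. msym nu x)"

definition hprod :: "nat list \<Rightarrow> (nat \<Rightarrow> real) \<Rightarrow> real" where
  "hprod lam x = (\<Prod>k\<leftarrow>lam. hsym k x)"

text \<open>M(lam,nu) = number of 0-1 matrices with row sums lam and column sums nu,
  i.e. the coefficient of m_nu in e_lam: e_lam = sum_nu M(lam,nu) m_nu.\<close>
definition emcoeff :: "nat list \<Rightarrow> nat list \<Rightarrow> nat" where
  "emcoeff lam nu = card {A. A \<subseteq> {0..<length lam} \<times> {0..<length nu} \<and>
      (\<forall>i<length lam. card {j. (i,j) \<in> A} = lam ! i) \<and>
      (\<forall>j<length nu. card {i. (i,j) \<in> A} = nu ! j)}"

text \<open>The inverse matrix (indexed by partitions of n): m_mu = sum_lam Minv(mu,lam) e_lam.\<close>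
definition me_coeff :: "nat \<Rightarrow> nat list \<Rightarrow> nat list \<Rightarrow> real" where
  "me_coeff n = (THE G. (\<forall>lam nu. (lam \<notin> partitions n \<or> nu \<notin> partitions n) \<longrightarrow> G lam nu = 0) \<and>
      (\<forall>lam\<in>partitions n. \<forall>ka\<in>partitions n.
         (\<Sum>nu\<in>partitions n. G lam nu * real (emcoeff nu ka)) = (if lam = ka then 1 else 0)))"

text \<open>Forgotten symmetric function f_mu = omega m_mu = sum_lam Minv(mu,lam) h_lam
  (omega e_lam = h_lam), evaluated at the alphabet x.\<close>
definition forgotten :: "nat list \<Rightarrow> (nat \<Rightarrow> real) \<Rightarrow> real" where
  "forgotten mu x = (\<Sum>lam\<in>partitions (sum_list mu). me_coeff (sum_list mu) mu lam * hprod lam x)"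

definition qpoch :: "real \<Rightarrow> nat \<Rightarrow> real" where
  "qpoch q m = (\<Prod>i=1..m. 1 - q ^ i)"

end

theory Submission
  imports Defs "HOL-Combinatorics.Multiset_Permutations" "HOL-Library.List_Lexorder"
begin

text \<open>
  At \<open>x\<^sub>i = q\<^sup>i\<close> a monomial of degree \<open>k\<close> becomes a power of \<open>q\<close>; splitting off the
  exponent of \<open>x\<^sub>0\<close> gives \<open>h\<^sub>k[1/(1-q)] = 1/(q;q)\<^sub>k\<close>. Removing the first column of a 0-1 matrix
  with row sums \<open>r\<close> and summing over its support by inclusion-exclusion shows
  \<open>\<Prod>\<^sub>i 1/(q;q)\<^bsub>r\<^sub>i\<^esub> = \<Sum>\<^sub>w M(r,w) (-1)\<^bsup>|w|-\<ell>(w)\<^esup> / \<Prod>\<^sub>j (1 - q\<^bsup>w\<^sub>j+...+w\<^sub>\<ell>\<^esup>)\<close>,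
  summed over the compositions \<open>w\<close> of \<open>|r|\<close>. Since \<open>M(r,w)\<close> only depends on the multiset of parts
  of \<open>w\<close>, this says \<open>h\<^sub>\<lambda> = \<Sum>\<^sub>\<nu> M(\<lambda>,\<nu>) F\<^sub>\<nu>\<close>, where \<open>F\<^sub>\<nu>\<close> collects the terms of the rearrangements of
  \<open>\<nu>\<close>. Ordering its rows by conjugate partitions makes \<open>M\<close> triangular with nonzero diagonal, so
  \<open>f\<^sub>\<mu> = \<Sum>\<^sub>\<lambda> M\<^sup>-\<^sup>1(\<mu>,\<lambda>) h\<^sub>\<lambda>\<close> gives \<open>f\<^sub>\<mu>[1/(1-q)] = F\<^sub>\<mu>\<close>. Finally the suffix sums of a
  rearrangement \<open>w\<close> of \<open>\<mu>\<close> are \<open>\<ell>(\<mu>)\<close> distinct elements of \<open>{1..m}\<close>, so multiplying its term by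
  \<open>(q;q)\<^sub>m\<close> leaves \<open>(-1)\<^bsup>m-\<ell>(\<mu>)\<^esup>\<close> times the remaining factors \<open>1 - q\<^sup>i = (1 - q) [i]\<^sub>q\<close>.
\<close>

section \<open>Complete homogeneous functions at \<open>1, q, q\<^sup>2, ...\<close>\<close>

lemma qpoch_Suc: "qpoch q (Suc k) = qpoch q k * (1 - q ^ Suc k)"
  unfolding qpoch_def by simp

lemma qpoch_pos: "0 < q \<Longrightarrow> q < 1 \<Longrightarrow> 0 < qpoch q k"
  unfolding qpoch_def by (intro prod_pos) (auto simp: power_less_one_iff)

lemma sum_power_div_qpoch:
  assumes "qpoch q k \<noteq> 0"
  shows "(\<Sum>i\<le>k. q ^ i / qpoch q i) = 1 / qpoch q k"
  using assms
proof (induction k)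
  case 0
  then show ?case by (simp add: qpoch_def)
next
  case (Suc k)
  then have "qpoch q k \<noteq> 0" "1 - q ^ Suc k \<noteq> 0"
    by (simp_all add: qpoch_Suc del: power_Suc)
  with Suc.IH show ?case
    by (simp add: qpoch_Suc field_simps del: power_Suc)
qed

text \<open>A monomial \<open>x\<^sup>\<alpha>\<close> in \<open>x\<^sub>0, x\<^sub>1, ...\<close> is a finitely supported exponent vector \<open>\<alpha>\<close>;
  at \<open>x\<^sub>i = q\<^sup>i\<close> it evaluates to \<open>q\<close> to the power \<open>exps_qdegree \<alpha>\<close>.\<close>

definition exps_degree :: "(nat \<Rightarrow> nat) \<Rightarrow> nat" where
  "exps_degree \<alpha> = sum \<alpha> {i. \<alpha> i \<noteq> 0}"

definition exps_qdegree :: "(nat \<Rightarrow> nat) \<Rightarrow> nat" where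
  "exps_qdegree \<alpha> = (\<Sum>i\<in>{i. \<alpha> i \<noteq> 0}. i * \<alpha> i)"

definition exps_of_degree :: "nat \<Rightarrow> (nat \<Rightarrow> nat) set" where
  "exps_of_degree k = {\<alpha>. finite {i. \<alpha> i \<noteq> 0} \<and> exps_degree \<alpha> = k}"

definition exps_below :: "nat \<Rightarrow> nat \<Rightarrow> (nat \<Rightarrow> nat) set" where
  "exps_below n k = {\<alpha> \<in> exps_of_degree k. \<forall>i\<ge>n. \<alpha> i = 0}"

lemma power_exps_qdegree:
  "(q::'a::comm_monoid_mult) ^ exps_qdegree \<alpha> = (\<Prod>i\<in>{i. \<alpha> i \<noteq> 0}. (q ^ i) ^ \<alpha> i)"
  unfolding exps_qdegree_def by (simp add: power_mult power_sum)

lemma support_case_nat: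
  "{i. case_nat j \<beta> i \<noteq> (0::nat)} \<subseteq> insert 0 (Suc ` {i. \<beta> i \<noteq> 0})"
proof
  fix i assume "i \<in> {i. case_nat j \<beta> i \<noteq> 0}"
  then show "i \<in> insert 0 (Suc ` {i. \<beta> i \<noteq> 0})"
    by (cases i) auto
qed

lemma finite_support_case_nat:
  "finite {i. case_nat j \<beta> i \<noteq> (0::nat)} \<longleftrightarrow> finite {i. \<beta> i \<noteq> 0}"
proof
  assume "finite {i. case_nat j \<beta> i \<noteq> 0}"
  then have "finite (Suc -` {i. case_nat j \<beta> i \<noteq> 0})"
    by (rule finite_vimageI) simp
  then show "finite {i. \<beta> i \<noteq> 0}"
    by (simp add: vimage_def)
next
  assume "finite {i. \<beta> i \<noteq> 0}"
  then show "finite {i. case_nat j \<beta> i \<noteq> 0}"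
    by (intro finite_subset[OF support_case_nat]) simp
qed

lemma case_nat_eq_iff: "case_nat j \<beta> = case_nat j' \<beta>' \<longleftrightarrow> j = j' \<and> \<beta> = \<beta>'"
  by (metis nat.case(1,2) ext)

lemma case_nat_decompose: "\<alpha> = case_nat (\<alpha> 0) (\<lambda>i. \<alpha> (Suc i))"
  by (rule ext) (simp split: nat.split)

lemma exps_degree_case_nat:
  assumes "finite {i. \<beta> i \<noteq> 0}"
  shows "exps_degree (case_nat j \<beta>) = j + exps_degree \<beta>"
    and "exps_qdegree (case_nat j \<beta>) = exps_degree \<beta> + exps_qdegree \<beta>"
proof -
  obtain N where N: "{i. \<beta> i \<noteq> 0} \<subseteq> {..<N}"
    using finite_nat_bounded[OF assms] by blast
  then have N': "{i. case_nat j \<beta> i \<noteq> 0} \<subseteq> {..<Suc N}"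
    using support_case_nat[of j \<beta>] by auto
  have deg: "exps_degree \<gamma> = sum \<gamma> {..<M}" "exps_qdegree \<gamma> = (\<Sum>i<M. i * \<gamma> i)"
    if "{i. \<gamma> i \<noteq> 0} \<subseteq> {..<M}" for \<gamma> M
    unfolding exps_degree_def exps_qdegree_def using that
    by (auto intro: sum.mono_neutral_left)
  show "exps_degree (case_nat j \<beta>) = j + exps_degree \<beta>"
    unfolding deg(1)[OF N] deg(1)[OF N'] by (subst sum.lessThan_Suc_shift) simp
  show "exps_qdegree (case_nat j \<beta>) = exps_degree \<beta> + exps_qdegree \<beta>"
    unfolding deg[OF N] deg(2)[OF N'] by (subst sum.lessThan_Suc_shift) (simp add: sum.distrib)
qed

lemma case_nat_in_exps_of_degree:
  "\<beta> \<in> exps_of_degree i \<Longrightarrow> j + i = k \<Longrightarrow> case_nat j \<beta> \<in> exps_of_degree k"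
  unfolding exps_of_degree_def using finite_support_case_nat exps_degree_case_nat(1) by blast

lemma power_exps_qdegree_case_nat:
  "\<beta> \<in> exps_of_degree i \<Longrightarrow>
    (q::'a::monoid_mult) ^ exps_qdegree (case_nat j \<beta>) = q ^ i * q ^ exps_qdegree \<beta>"
  unfolding exps_of_degree_def using exps_degree_case_nat(2) by (auto simp: power_add)

lemma exps_of_degree_0: "exps_of_degree 0 = {\<lambda>_. 0}"
  by (auto simp: exps_of_degree_def exps_degree_def fun_eq_iff)

lemma exps_of_degree_eq_Union:
  "exps_of_degree k = (\<Union>i\<le>k. case_nat (k - i) ` exps_of_degree i)"
proof (intro equalityI subsetI)
  fix \<alpha> assume \<alpha>: "\<alpha> \<in> exps_of_degree k"
  define \<beta> where "\<beta> = (\<lambda>i. \<alpha> (Suc i))"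
  have \<alpha>_eq: "case_nat (\<alpha> 0) \<beta> = \<alpha>"
    unfolding \<beta>_def by (rule case_nat_decompose[symmetric])
  have "finite {i. case_nat (\<alpha> 0) \<beta> i \<noteq> 0}"
    using \<alpha> by (simp only: \<alpha>_eq exps_of_degree_def mem_Collect_eq)
  then have \<beta>: "finite {i. \<beta> i \<noteq> 0}"
    using finite_support_case_nat by blast
  have "k = \<alpha> 0 + exps_degree \<beta>"
    using \<alpha> exps_degree_case_nat(1)[OF \<beta>, of "\<alpha> 0"] by (simp add: \<alpha>_eq exps_of_degree_def)
  with \<beta> have "\<beta> \<in> exps_of_degree (exps_degree \<beta>)" "\<alpha> = case_nat (k - exps_degree \<beta>) \<beta>"
      "exps_degree \<beta> \<le> k"
    by (simp_all add: exps_of_degree_def \<alpha>_eq)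
  then show "\<alpha> \<in> (\<Union>i\<le>k. case_nat (k - i) ` exps_of_degree i)"
    by blast
qed (auto intro: case_nat_in_exps_of_degree)

lemma inj_case_nat: "inj (case_nat j)"
  by (rule injI) (simp add: case_nat_eq_iff)

lemma disjoint_case_nat_images:
  assumes "A \<subseteq> exps_of_degree i" "B \<subseteq> exps_of_degree i'" "i \<noteq> i'"
  shows "case_nat j ` A \<inter> case_nat j' ` B = {}"
  using assms by (auto simp: case_nat_eq_iff exps_of_degree_def)

lemma exps_below_0: "exps_below 0 k = (if k = 0 then {\<lambda>_. 0} else {})"
proof -
  have "exps_below 0 k = exps_of_degree k \<inter> {\<lambda>_. 0}"
    by (auto simp: exps_below_def)
  then show ?thesis
    by (auto simp: exps_of_degree_def exps_degree_def)
qed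

lemma case_nat_vanishes_from_Suc:
  "(\<forall>i\<ge>Suc n. case_nat j \<beta> i = 0) \<longleftrightarrow> (\<forall>i\<ge>n. \<beta> i = 0)"
proof
  assume "\<forall>i\<ge>Suc n. case_nat j \<beta> i = 0"
  then show "\<forall>i\<ge>n. \<beta> i = 0"
    by (metis Suc_le_mono nat.case(2))
next
  assume "\<forall>i\<ge>n. \<beta> i = 0"
  then show "\<forall>i\<ge>Suc n. case_nat j \<beta> i = 0"
    by (auto simp: Suc_le_eq split: nat.split)
qed

lemma exps_below_Suc: "exps_below (Suc n) k = (\<Union>i\<le>k. case_nat (k - i) ` exps_below n i)"
proof (intro equalityI subsetI)
  fix \<alpha> assume \<alpha>: "\<alpha> \<in> exps_below (Suc n) k"
  then obtain i \<beta> where i: "i \<le> k" "\<beta> \<in> exps_of_degree i" and \<alpha>_eq: "\<alpha> = case_nat (k - i) \<beta>"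
    unfolding exps_below_def exps_of_degree_eq_Union[of k] by blast
  have "\<forall>j\<ge>n. \<beta> j = 0"
    using \<alpha> case_nat_vanishes_from_Suc[of n "k - i" \<beta>] by (simp add: exps_below_def \<alpha>_eq)
  with i have "\<beta> \<in> exps_below n i"
    by (simp add: exps_below_def)
  with i \<alpha>_eq show "\<alpha> \<in> (\<Union>i\<le>k. case_nat (k - i) ` exps_below n i)"
    by blast
next
  fix \<alpha> assume "\<alpha> \<in> (\<Union>i\<le>k. case_nat (k - i) ` exps_below n i)"
  then obtain i \<beta> where "i \<le> k" "\<beta> \<in> exps_of_degree i" "\<forall>j\<ge>n. \<beta> j = 0"
      "\<alpha> = case_nat (k - i) \<beta>"
    unfolding exps_below_def by blast
  then show "\<alpha> \<in> exps_below (Suc n) k"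
    unfolding exps_below_def
    using case_nat_in_exps_of_degree case_nat_vanishes_from_Suc[of n "k - i" \<beta>] by simp
qed

lemma finite_exps_below: "finite (exps_below n k)"
  by (induction n arbitrary: k) (simp_all add: exps_below_0 exps_below_Suc)

lemma finite_subset_exps_below:
  "finite F \<Longrightarrow> F \<subseteq> exps_of_degree k \<Longrightarrow> \<exists>n. F \<subseteq> exps_below n k"
proof (induction F rule: finite_induct)
  case empty
  then show ?case by blast
next
  case (insert \<alpha> F)
  then obtain n where n: "F \<subseteq> exps_below n k" by blast
  have "finite {i. \<alpha> i \<noteq> 0}"
    using insert.prems by (simp add: exps_of_degree_def)
  then obtain N where "{i. \<alpha> i \<noteq> 0} \<subseteq> {..<N}"
    using finite_nat_bounded by blast
  then have "insert \<alpha> F \<subseteq> exps_below (max n N) k"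
    using insert.prems n by (fastforce simp: exps_below_def)
  then show ?case by blast
qed

lemma infsum_image_case_nat:
  fixes q :: real
  assumes "A \<subseteq> exps_of_degree i"
  shows "(\<Sum>\<^sub>\<infinity>\<alpha>\<in>case_nat j ` A. q ^ exps_qdegree \<alpha>) = q ^ i * (\<Sum>\<^sub>\<infinity>\<beta>\<in>A. q ^ exps_qdegree \<beta>)"
proof -
  have "(\<Sum>\<^sub>\<infinity>\<alpha>\<in>case_nat j ` A. q ^ exps_qdegree \<alpha>) = (\<Sum>\<^sub>\<infinity>\<beta>\<in>A. q ^ exps_qdegree (case_nat j \<beta>))"
    by (simp add: infsum_reindex inj_on_subset[OF inj_case_nat] o_def)
  also have "\<dots> = (\<Sum>\<^sub>\<infinity>\<beta>\<in>A. q ^ i * q ^ exps_qdegree \<beta>)"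
    using assms by (intro infsum_cong) (simp add: power_exps_qdegree_case_nat subset_iff)
  finally show ?thesis by (simp add: infsum_cmult_right')
qed

lemma sum_image_case_nat:
  fixes q :: real
  assumes "A \<subseteq> exps_of_degree i" "finite A"
  shows "(\<Sum>\<alpha>\<in>case_nat j ` A. q ^ exps_qdegree \<alpha>) = q ^ i * (\<Sum>\<beta>\<in>A. q ^ exps_qdegree \<beta>)"
  using infsum_image_case_nat[OF assms(1)] assms(2) by (simp add: infsum_finite)

lemma sum_exps_below_le:
  fixes q :: real
  assumes q: "0 < q" "q < 1"
  shows "(\<Sum>\<alpha>\<in>exps_below n k. q ^ exps_qdegree \<alpha>) \<le> 1 / qpoch q k"
proof (induction n arbitrary: k)
  case 0
  show ?case using qpoch_pos[OF q, of k] by (simp add: exps_below_0 qpoch_def exps_qdegree_def)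
next
  case (Suc n)
  have "(\<Sum>\<alpha>\<in>exps_below (Suc n) k. q ^ exps_qdegree \<alpha>)
      = (\<Sum>i\<le>k. \<Sum>\<alpha>\<in>case_nat (k - i) ` exps_below n i. q ^ exps_qdegree \<alpha>)"
    unfolding exps_below_Suc
  proof (rule sum.UNION_disjoint)
    show "\<forall>i\<in>{..k}. \<forall>i'\<in>{..k}. i \<noteq> i' \<longrightarrow>
        case_nat (k - i) ` exps_below n i \<inter> case_nat (k - i') ` exps_below n i' = {}"
      by (intro ballI impI disjoint_case_nat_images) (auto simp: exps_below_def)
  qed (simp_all add: finite_exps_below)
  also have "\<dots> = (\<Sum>i\<le>k. q ^ i * (\<Sum>\<beta>\<in>exps_below n i. q ^ exps_qdegree \<beta>))"
    by (intro sum.cong refl sum_image_case_nat finite_exps_below) (auto simp: exps_below_def)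
  also have "\<dots> \<le> (\<Sum>i\<le>k. q ^ i * (1 / qpoch q i))"
    using Suc.IH q by (intro sum_mono mult_left_mono) simp_all
  also have "\<dots> = 1 / qpoch q k"
    using sum_power_div_qpoch[of q k] qpoch_pos[OF q, of k] by simp
  finally show ?case .
qed

lemma summable_on_exps_of_degree:
  fixes q :: real
  assumes q: "0 < q" "q < 1"
  shows "(\<lambda>\<alpha>. q ^ exps_qdegree \<alpha>) summable_on exps_of_degree k"
proof (rule nonneg_bdd_above_summable_on)
  show "bdd_above (sum (\<lambda>\<alpha>. q ^ exps_qdegree \<alpha>) ` {F. F \<subseteq> exps_of_degree k \<and> finite F})"
  proof (rule bdd_aboveI2)
    fix F assume F: "F \<in> {F. F \<subseteq> exps_of_degree k \<and> finite F}"
    then obtain n where "F \<subseteq> exps_below n k"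
      using finite_subset_exps_below by blast
    then have "(\<Sum>\<alpha>\<in>F. q ^ exps_qdegree \<alpha>) \<le> (\<Sum>\<alpha>\<in>exps_below n k. q ^ exps_qdegree \<alpha>)"
      using q by (intro sum_mono2) (simp_all add: finite_exps_below)
    also have "\<dots> \<le> 1 / qpoch q k" by (rule sum_exps_below_le[OF q])
    finally show "(\<Sum>\<alpha>\<in>F. q ^ exps_qdegree \<alpha>) \<le> 1 / qpoch q k" .
  qed
qed (use q in simp)

lemma infsum_exps_of_degree:
  fixes q :: real
  assumes q: "0 < q" "q < 1"
  shows "(\<Sum>\<^sub>\<infinity>\<alpha>\<in>exps_of_degree k. q ^ exps_qdegree \<alpha>) = 1 / qpoch q k"
proof (induction k rule: less_induct)
  case (less k)
  define S where "S i = (\<Sum>\<^sub>\<infinity>\<alpha>\<in>exps_of_degree i. q ^ exps_qdegree \<alpha>)" for i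
  have "S k = (\<Sum>i\<le>k. \<Sum>\<^sub>\<infinity>\<alpha>\<in>case_nat (k - i) ` exps_of_degree i. q ^ exps_qdegree \<alpha>)"
    unfolding S_def
  proof (subst exps_of_degree_eq_Union, rule sum_infsum[symmetric])
    show "(\<lambda>\<alpha>. q ^ exps_qdegree \<alpha>) summable_on case_nat (k - i) ` exps_of_degree i"
      if "i \<in> {..k}" for i
      using that by (intro summable_on_subset_banach[OF summable_on_exps_of_degree[OF q, of k]])
        (auto intro: case_nat_in_exps_of_degree)
    show "case_nat (k - i) ` exps_of_degree i \<inter> case_nat (k - i') ` exps_of_degree i' = {}"
      if "i \<noteq> i'" for i i'
      using that by (rule disjoint_case_nat_images[rotated 2]) auto
  qed simp
  also have "\<dots> = (\<Sum>i\<le>k. q ^ i * S i)"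
    unfolding S_def by (intro sum.cong refl infsum_image_case_nat) simp
  finally have rec: "S k = (\<Sum>i<k. q ^ i * S i) + q ^ k * S k"
    by (simp add: lessThan_Suc_atMost[symmetric])
  show ?case
  proof (cases k)
    case 0
    then show ?thesis by (simp add: exps_of_degree_0 qpoch_def exps_qdegree_def)
  next
    case (Suc k')
    have "(\<Sum>i<k. q ^ i * S i) = 1 / qpoch q k'"
      using less.IH sum_power_div_qpoch[of q k'] qpoch_pos[OF q, of k'] Suc
      by (simp add: S_def lessThan_Suc_atMost)
    moreover have "q ^ k < 1"
      using q Suc by (simp add: power_less_one_iff del: power_Suc)
    ultimately have "S k * (1 - q ^ k) = 1 / qpoch q k'" "1 - q ^ k \<noteq> 0"
      using rec by (simp_all add: algebra_simps)
    then show ?thesis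
      using qpoch_pos[OF q, of k'] Suc by (simp add: S_def qpoch_Suc field_simps del: power_Suc)
  qed
qed

definition compositions :: "nat \<Rightarrow> nat list set" where
  "compositions n = {w. 0 \<notin> set w \<and> sum_list w = n}"

lemma length_le_sum_list: "0 \<notin> set w \<Longrightarrow> length w \<le> sum_list (w :: nat list)"
  by (induction w) (auto simp: Suc_le_eq)

lemma finite_compositions: "finite (compositions n)"
proof (rule finite_subset)
  show "compositions n \<subseteq> {w. set w \<subseteq> {..n} \<and> length w \<le> n}"
    using length_le_sum_list member_le_sum_list by (fastforce simp: compositions_def)
qed (rule finite_lists_length_le, simp)

lemma partitions_subset_compositions: "partitions n \<subseteq> compositions n"
  by (auto simp: partitions_def compositions_def)

lemma finite_partitions: "finite (partitions n)"
  using finite_compositions partitions_subset_compositions by (rule finite_subset[rotated])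

lemma partitions_eq_if_mset_eq:
  assumes nu: "nu \<in> partitions k" and nu': "nu' \<in> partitions k'" and "mset nu = mset nu'"
  shows "nu = nu'"
proof -
  have "sort (rev nu) = rev nu'"
    using assms
    by (intro properties_for_sort) (auto simp: partitions_def)
  moreover have "sort (rev nu) = rev nu"
    using nu by (intro sorted_sort_id) (simp add: partitions_def)
  ultimately show ?thesis by simp
qed

lemma rev_sorted_list_of_multiset_in_partitions:
  assumes "0 \<notin># M"
  shows "rev (sorted_list_of_multiset M) \<in> partitions (sum_mset M)"
proof -
  have "sum_list (sorted_list_of_multiset M) = sum_mset M"
    by (metis mset_sorted_list_of_multiset sum_mset_sum_list)
  with assms show ?thesis
    by (simp add: partitions_def)
qed

definition exps_of_shape :: "nat list \<Rightarrow> (nat \<Rightarrow> nat) set" where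
  "exps_of_shape nu = {\<alpha>. finite {i. \<alpha> i \<noteq> 0} \<and> image_mset \<alpha> (mset_set {i. \<alpha> i \<noteq> 0}) = mset nu}"

lemma msym_qpowers: "msym nu (\<lambda>i. q ^ i) = (\<Sum>\<^sub>\<infinity>\<alpha>\<in>exps_of_shape nu. q ^ exps_qdegree \<alpha>)"
  unfolding msym_def exps_of_shape_def power_exps_qdegree ..

lemma exps_of_degree_eq_Union_shapes:
  "exps_of_degree k = (\<Union>nu\<in>partitions k. exps_of_shape nu)"
proof (intro equalityI subsetI)
  fix \<alpha> assume \<alpha>: "\<alpha> \<in> exps_of_degree k"
  define M where "M = image_mset \<alpha> (mset_set {i. \<alpha> i \<noteq> 0})"
  have "0 \<notin># M" "sum_mset M = k"
    using \<alpha> by (auto simp: M_def exps_of_degree_def exps_degree_def sum_unfold_sum_mset)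
  then have "rev (sorted_list_of_multiset M) \<in> partitions k"
    using rev_sorted_list_of_multiset_in_partitions by blast
  moreover have "\<alpha> \<in> exps_of_shape (rev (sorted_list_of_multiset M))"
    using \<alpha> by (simp add: exps_of_shape_def exps_of_degree_def M_def)
  ultimately show "\<alpha> \<in> (\<Union>nu\<in>partitions k. exps_of_shape nu)"
    by blast
next
  fix \<alpha> assume "\<alpha> \<in> (\<Union>nu\<in>partitions k. exps_of_shape nu)"
  then obtain nu where "nu \<in> partitions k" "finite {i. \<alpha> i \<noteq> 0}"
      "image_mset \<alpha> (mset_set {i. \<alpha> i \<noteq> 0}) = mset nu"
    by (auto simp: exps_of_shape_def)
  then show "\<alpha> \<in> exps_of_degree k"
    by (simp add: exps_of_degree_def exps_degree_def sum_unfold_sum_mset sum_mset_sum_list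
        partitions_def)
qed

lemma hsym_qpowers:
  fixes q :: real
  assumes q: "0 < q" "q < 1"
  shows "hsym k (\<lambda>i. q ^ i) = 1 / qpoch q k"
proof -
  have "hsym k (\<lambda>i. q ^ i) = (\<Sum>nu\<in>partitions k. \<Sum>\<^sub>\<infinity>\<alpha>\<in>exps_of_shape nu. q ^ exps_qdegree \<alpha>)"
    by (simp add: hsym_def msym_qpowers)
  also have "\<dots> = (\<Sum>\<^sub>\<infinity>\<alpha>\<in>exps_of_degree k. q ^ exps_qdegree \<alpha>)"
    unfolding exps_of_degree_eq_Union_shapes
  proof (rule sum_infsum)
    show "(\<lambda>\<alpha>. q ^ exps_qdegree \<alpha>) summable_on exps_of_shape nu" if "nu \<in> partitions k" for nu
      using that by (intro summable_on_subset_banach[OF summable_on_exps_of_degree[OF q, of k]])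
        (auto simp: exps_of_degree_eq_Union_shapes)
    show "exps_of_shape nu \<inter> exps_of_shape nu' = {}"
      if "nu \<in> partitions k" "nu' \<in> partitions k" "nu \<noteq> nu'" for nu nu'
      using that partitions_eq_if_mset_eq by (auto simp: exps_of_shape_def)
  qed (rule finite_partitions)
  also have "\<dots> = 1 / qpoch q k"
    by (rule infsum_exps_of_degree[OF q])
  finally show ?thesis .
qed

lemma hprod_qpowers:
  fixes q :: real
  assumes "0 < q" "q < 1"
  shows "hprod lam (\<lambda>i. q ^ i) = (\<Prod>k\<leftarrow>lam. 1 / qpoch q k)"
  by (simp add: hprod_def hsym_qpowers[OF assms])

section \<open>0-1 matrices\<close>

definition zero_one_matrices :: "nat list \<Rightarrow> nat list \<Rightarrow> (nat \<times> nat) set set" where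
  "zero_one_matrices r c = {A. A \<subseteq> {0..<length r} \<times> {0..<length c} \<and>
      (\<forall>i<length r. card {j. (i, j) \<in> A} = r ! i) \<and>
      (\<forall>j<length c. card {i. (i, j) \<in> A} = c ! j)}"

lemma emcoeff_eq_card: "emcoeff r c = card (zero_one_matrices r c)"
  unfolding emcoeff_def zero_one_matrices_def ..

lemma finite_zero_one_matrices: "finite (zero_one_matrices r c)"
  by (rule finite_subset[of _ "Pow ({0..<length r} \<times> {0..<length c})"])
    (auto simp: zero_one_matrices_def)

lemma finite_row: "A \<subseteq> {0..<m::nat} \<times> {0..<n::nat} \<Longrightarrow> finite {j. (i, j) \<in> A}"
  by (rule finite_subset[of _ "{0..<n}"]) auto

definition pos_rows :: "nat list \<Rightarrow> nat set" where
  "pos_rows r = {i. i < length r \<and> 0 < r ! i}"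

definition decr_rows :: "nat list \<Rightarrow> nat set \<Rightarrow> nat list" where
  "decr_rows r S = map (\<lambda>i. r ! i - (if i \<in> S then 1 else 0)) [0..<length r]"

definition add_first_col :: "nat set \<Rightarrow> (nat \<times> nat) set \<Rightarrow> (nat \<times> nat) set" where
  "add_first_col S B = (\<lambda>i. (i, 0)) ` S \<union> (\<lambda>(i, j). (i, Suc j)) ` B"

definition first_col_supports :: "nat list \<Rightarrow> nat \<Rightarrow> nat set set" where
  "first_col_supports r a = {S. S \<subseteq> pos_rows r \<and> card S = a}"

lemma finite_pos_rows [simp]: "finite (pos_rows r)"
  by (simp add: pos_rows_def)

lemma finite_first_col_supports [simp]: "finite (first_col_supports r a)"
  unfolding first_col_supports_def by (rule finite_subset[of _ "Pow (pos_rows r)"]) auto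

lemma length_decr_rows [simp]: "length (decr_rows r S) = length r"
  by (simp add: decr_rows_def)

lemma nth_decr_rows [simp]: "i < length r \<Longrightarrow> decr_rows r S ! i = r ! i - (if i \<in> S then 1 else 0)"
  by (simp add: decr_rows_def)

lemma add_first_col_simps [simp]:
  "(i, 0) \<in> add_first_col S B \<longleftrightarrow> i \<in> S"
  "(i, Suc j) \<in> add_first_col S B \<longleftrightarrow> (i, j) \<in> B"
  by (auto simp: add_first_col_def)

lemma first_col_add_first_col: "{i. (i, 0) \<in> add_first_col S B} = S"
  by simp

lemma inj_add_first_col: "inj (add_first_col S)"
proof (rule injI)
  fix B B' assume "add_first_col S B = add_first_col S B'"
  then have "(i, Suc j) \<in> add_first_col S B \<longleftrightarrow> (i, Suc j) \<in> add_first_col S B'" for i j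
    by simp
  then show "B = B'" by auto
qed

lemma card_row_add_first_col:
  assumes "finite {j. (i, j) \<in> B}"
  shows "card {j. (i, j) \<in> add_first_col S B} = (if i \<in> S then 1 else 0) + card {j. (i, j) \<in> B}"
proof -
  have "j \<in> {j. (i, j) \<in> add_first_col S B} \<longleftrightarrow>
      j \<in> (if i \<in> S then {0} else {}) \<union> Suc ` {j. (i, j) \<in> B}" for j
    by (cases j) auto
  then have "{j. (i, j) \<in> add_first_col S B} = (if i \<in> S then {0} else {}) \<union> Suc ` {j. (i, j) \<in> B}"
    by blast
  then show ?thesis
    using assms by (simp add: card_image)
qed

lemma add_first_col_in_zero_one_matrices:
  assumes S: "S \<in> first_col_supports r a" and B: "B \<in> zero_one_matrices (decr_rows r S) c"
  shows "add_first_col S B \<in> zero_one_matrices r (a # c)"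
  unfolding zero_one_matrices_def
proof (intro CollectI conjI allI impI)
  have B_sub: "B \<subseteq> {0..<length r} \<times> {0..<length c}"
    using B by (simp add: zero_one_matrices_def)
  then show "add_first_col S B \<subseteq> {0..<length r} \<times> {0..<length (a # c)}"
    using S by (auto simp: add_first_col_def first_col_supports_def pos_rows_def)
  fix i assume i: "i < length r"
  have "card {j. (i, j) \<in> B} = r ! i - (if i \<in> S then 1 else 0)"
    using B i by (simp add: zero_one_matrices_def)
  moreover have "i \<in> S \<Longrightarrow> 0 < r ! i"
    using S by (auto simp: first_col_supports_def pos_rows_def)
  ultimately show "card {j. (i, j) \<in> add_first_col S B} = r ! i"
    by (auto simp: card_row_add_first_col[OF finite_row[OF B_sub]])
next
  fix j assume j: "j < length (a # c)"
  show "card {i. (i, j) \<in> add_first_col S B} = (a # c) ! j"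
  proof (cases j)
    case 0
    then show ?thesis using S by (simp add: first_col_supports_def)
  next
    case (Suc j')
    then show ?thesis using B j by (simp add: zero_one_matrices_def)
  qed
qed

lemma col_subset_pos_rows:
  assumes A: "A \<in> zero_one_matrices r c"
  shows "{i. (i, j) \<in> A} \<subseteq> pos_rows r"
proof
  fix i assume "i \<in> {i. (i, j) \<in> A}"
  moreover have A_sub: "A \<subseteq> {0..<length r} \<times> {0..<length c}"
    using A by (simp add: zero_one_matrices_def)
  ultimately have i: "i < length r" "j \<in> {j. (i, j) \<in> A}"
    by auto
  then have "card {j. (i, j) \<in> A} \<noteq> 0"
    using finite_row[OF A_sub] by auto
  then show "i \<in> pos_rows r"
    using A i(1) by (simp add: pos_rows_def zero_one_matrices_def)
qed

lemma zero_one_matrix_split_first_col: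
  assumes A: "A \<in> zero_one_matrices r (a # c)"
  defines "S \<equiv> {i. (i, 0) \<in> A}" and "B \<equiv> {(i, j). (i, Suc j) \<in> A}"
  shows "A = add_first_col S B" "S \<in> first_col_supports r a"
    "B \<in> zero_one_matrices (decr_rows r S) c"
proof -
  have A_sub: "A \<subseteq> {0..<length r} \<times> {0..<Suc (length c)}"
    using A by (simp add: zero_one_matrices_def)
  have rows: "card {j. (i, j) \<in> A} = r ! i" if "i < length r" for i
    using A that by (simp add: zero_one_matrices_def)
  show A_eq: "A = add_first_col S B"
  proof (intro set_eqI)
    show "p \<in> A \<longleftrightarrow> p \<in> add_first_col S B" for p
      by (cases p; rename_tac i j; case_tac j) (auto simp: S_def B_def)
  qed
  have "S \<subseteq> pos_rows r"
    unfolding S_def by (rule col_subset_pos_rows[OF A])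
  moreover have "card S = a"
    using A by (simp add: zero_one_matrices_def S_def)
  ultimately show "S \<in> first_col_supports r a"
    by (simp add: first_col_supports_def)
  have B_sub: "B \<subseteq> {0..<length r} \<times> {0..<length c}"
    using A_sub by (auto simp: B_def)
  show "B \<in> zero_one_matrices (decr_rows r S) c"
    unfolding zero_one_matrices_def
  proof (intro CollectI conjI allI impI)
    show "B \<subseteq> {0..<length (decr_rows r S)} \<times> {0..<length c}"
      using B_sub by simp
    fix i assume "i < length (decr_rows r S)"
    then have i: "i < length r" by simp
    have "r ! i = (if i \<in> S then 1 else 0) + card {j. (i, j) \<in> B}"
      using rows[OF i] card_row_add_first_col[OF finite_row[OF B_sub], of i S] A_eq by simp
    then show "card {j. (i, j) \<in> B} = decr_rows r S ! i"
      using i by simp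
  next
    fix j assume "j < length c"
    then show "card {i. (i, j) \<in> B} = c ! j"
      using A by (simp add: zero_one_matrices_def B_def)
  qed
qed

lemma zero_one_matrices_Cons:
  "zero_one_matrices r (a # c) =
    (\<Union>S\<in>first_col_supports r a. add_first_col S ` zero_one_matrices (decr_rows r S) c)"
proof (intro equalityI subsetI)
  fix A assume "A \<in> zero_one_matrices r (a # c)"
  from zero_one_matrix_split_first_col[OF this] show
    "A \<in> (\<Union>S\<in>first_col_supports r a. add_first_col S ` zero_one_matrices (decr_rows r S) c)"
    by blast
qed (auto intro: add_first_col_in_zero_one_matrices)

lemma emcoeff_Cons:
  "emcoeff r (a # c) = (\<Sum>S\<in>first_col_supports r a. emcoeff (decr_rows r S) c)"
proof -
  have "emcoeff r (a # c) =
      (\<Sum>S\<in>first_col_supports r a. card (add_first_col S ` zero_one_matrices (decr_rows r S) c))"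
    unfolding emcoeff_eq_card zero_one_matrices_Cons
  proof (rule card_UN_disjoint)
    show "\<forall>S\<in>first_col_supports r a. \<forall>S'\<in>first_col_supports r a. S \<noteq> S' \<longrightarrow>
        add_first_col S ` zero_one_matrices (decr_rows r S) c \<inter>
        add_first_col S' ` zero_one_matrices (decr_rows r S') c = {}"
    proof (intro ballI impI)
      fix S S' :: "nat set" assume "S \<noteq> S'"
      then have "add_first_col S B \<noteq> add_first_col S' B'" for B B'
        by (metis first_col_add_first_col)
      then show "add_first_col S ` zero_one_matrices (decr_rows r S) c \<inter>
          add_first_col S' ` zero_one_matrices (decr_rows r S') c = {}"
        by blast
    qed
  qed (simp_all add: finite_zero_one_matrices)
  then show ?thesis
    by (simp add: emcoeff_eq_card card_image inj_on_subset[OF inj_add_first_col])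
qed

lemma emcoeff_Nil: "emcoeff r [] = (if \<forall>x\<in>set r. x = 0 then 1 else 0)"
proof -
  have "zero_one_matrices r [] = (if \<forall>i<length r. r ! i = 0 then {{}} else {})"
    by (auto simp: zero_one_matrices_def)
  then show ?thesis
    by (simp add: emcoeff_eq_card all_set_conv_all_nth)
qed

lemma permute_cols_in_zero_one_matrices:
  assumes p: "p permutes {..<length c}" and A: "A \<in> zero_one_matrices r c"
  shows "(\<lambda>(i, j). (i, inv p j)) ` A \<in> zero_one_matrices r (permute_list p c)"
  unfolding zero_one_matrices_def
proof (intro CollectI conjI allI impI)
  let ?A' = "(\<lambda>(i, j). (i, inv p j)) ` A"
  have ip: "inv p permutes {..<length c}"
    using permutes_inv[OF p] .
  have A_sub: "A \<subseteq> {0..<length r} \<times> {0..<length c}"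
    using A by (simp add: zero_one_matrices_def)
  then show "?A' \<subseteq> {0..<length r} \<times> {0..<length (permute_list p c)}"
    using permutes_in_image[OF ip] by auto
  fix i assume i: "i < length r"
  have "{j. (i, j) \<in> ?A'} = inv p ` {j. (i, j) \<in> A}"
    by auto
  then have "card {j. (i, j) \<in> ?A'} = card {j. (i, j) \<in> A}"
    by (simp add: card_image inj_on_subset[OF permutes_inj[OF ip]])
  then show "card {j. (i, j) \<in> ?A'} = r ! i"
    using A i by (simp add: zero_one_matrices_def)
next
  let ?A' = "(\<lambda>(i, j). (i, inv p j)) ` A"
  fix j assume j: "j < length (permute_list p c)"
  have "(i, j) \<in> ?A' \<longleftrightarrow> (i, p j) \<in> A" for i
  proof
    assume "(i, j) \<in> ?A'"
    then obtain j' where "(i, j') \<in> A" "j = inv p j'" by auto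
    then show "(i, p j) \<in> A" using permutes_inverses(1)[OF p] by simp
  next
    assume "(i, p j) \<in> A"
    then have "(i, inv p (p j)) \<in> ?A'" by force
    then show "(i, j) \<in> ?A'" using permutes_inverses(2)[OF p] by simp
  qed
  then have "{i. (i, j) \<in> ?A'} = {i. (i, p j) \<in> A}"
    by blast
  moreover have "p j < length c"
    using j permutes_in_image[OF p, of j] by simp
  ultimately show "card {i. (i, j) \<in> ?A'} = permute_list p c ! j"
    using A j by (simp add: zero_one_matrices_def permute_list_nth[OF p])
qed

lemma emcoeff_le_permute_list:
  assumes p: "p permutes {..<length c}"
  shows "emcoeff r c \<le> emcoeff r (permute_list p c)"
proof -
  have "inj (\<lambda>(i::nat, j). (i, inv p j))"
    using permutes_inj[OF permutes_inv[OF p]] by (auto simp: inj_def)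
  then have "inj_on (image (\<lambda>(i, j). (i, inv p j))) (zero_one_matrices r c)"
    by (simp add: inj_on_def inj_image_eq_iff)
  then show ?thesis
    unfolding emcoeff_eq_card
    by (rule card_inj_on_le[OF _ _ finite_zero_one_matrices])
      (auto intro: permute_cols_in_zero_one_matrices[OF p])
qed

lemma emcoeff_mset_eq:
  assumes "mset c = mset c'"
  shows "emcoeff r c = emcoeff r c'"
proof -
  obtain p where p: "p permutes {..<length c'}" "permute_list p c' = c"
    using mset_eq_permutation[OF assms] by blast
  have len: "length c = length c'"
    using assms by (metis size_mset)
  have "permute_list (inv p) c = c'"
    using p permute_list_compose[OF permutes_inv[OF p(1)], of p] permutes_inv_o(1)[OF p(1)]
    by simp
  moreover have "inv p permutes {..<length c}"
    using permutes_inv[OF p(1)] len by simp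
  ultimately show ?thesis
    using emcoeff_le_permute_list[OF p(1), of r] emcoeff_le_permute_list[of "inv p" c r] p(2)
    by simp
qed

section \<open>Conjugate partitions and the inverse of \<open>M\<close>\<close>

lemma sum_list_map_minus_one:
  "sum_list (map (\<lambda>x. x - 1) r) + length (filter (\<lambda>x. 0 < x) r) = sum_list (r :: nat list)"
  by (induction r) auto

function conjugate :: "nat list \<Rightarrow> nat list" where
  "conjugate r = (if \<forall>x\<in>set r. x = 0 then []
     else length (filter (\<lambda>x. 0 < x) r) # conjugate (map (\<lambda>x. x - 1) r))"
  by auto
termination
proof (relation "Wellfounded.measure sum_list")
  fix r :: "nat list" assume "\<not> (\<forall>x\<in>set r. x = 0)"
  then have "0 < length (filter (\<lambda>x. 0 < x) r)"
    by (auto simp: length_greater_0_conv filter_empty_conv)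
  then have "sum_list (map (\<lambda>x. x - 1) r) < sum_list r"
    using sum_list_map_minus_one[of r] by linarith
  then show "(map (\<lambda>x. x - 1) r, r) \<in> Wellfounded.measure sum_list"
    by simp
qed simp

declare conjugate.simps [simp del]

lemma conjugate_all_zero [simp]: "\<forall>x\<in>set r. x = 0 \<Longrightarrow> conjugate r = []"
  by (subst conjugate.simps) simp

lemma conjugate_not_all_zero:
  "\<not> (\<forall>x\<in>set r. x = 0) \<Longrightarrow>
    conjugate r = length (filter (\<lambda>x. 0 < x) r) # conjugate (map (\<lambda>x. x - 1) r)"
  by (subst conjugate.simps) simp

lemma length_filter_le_map_minus_one:
  "length (filter (\<lambda>x. 0 < x) (map (\<lambda>x. x - 1) r)) \<le> length (filter (\<lambda>x. 0 < x) (r :: nat list))"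
  by (induction r) auto

lemma conjugate_le_length_filter: "\<forall>y\<in>set (conjugate r). y \<le> length (filter (\<lambda>x. 0 < x) r)"
proof (induction r rule: conjugate.induct)
  case (1 r)
  show ?case
  proof (cases "\<forall>x\<in>set r. x = 0")
    case True
    then show ?thesis by simp
  next
    case False
    then show ?thesis
      using 1 length_filter_le_map_minus_one[of r] by (auto simp: conjugate_not_all_zero)
  qed
qed

lemma conjugate_in_partitions: "conjugate r \<in> partitions (sum_list r)"
proof (induction r rule: conjugate.induct)
  case (1 r)
  show ?case
  proof (cases "\<forall>x\<in>set r. x = 0")
    case True
    then show ?thesis
      by (simp add: partitions_def sum_list_eq_0_iff)
  next
    case False
    let ?r' = "map (\<lambda>x. x - 1) r"
    have IH: "conjugate ?r' \<in> partitions (sum_list ?r')"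
      using 1 False .
    have "0 < length (filter (\<lambda>x. 0 < x) r)"
      using False by (auto simp: length_greater_0_conv filter_empty_conv)
    moreover have "\<forall>y\<in>set (conjugate ?r'). y \<le> length (filter (\<lambda>x. 0 < x) r)"
      using conjugate_le_length_filter[of ?r'] length_filter_le_map_minus_one[of r] by auto
    ultimately show ?thesis
      using IH False sum_list_map_minus_one[of r]
      by (auto simp: partitions_def conjugate_not_all_zero sorted_append)
  qed
qed

lemma nth_conjugate:
  "(if i < length (conjugate r) then conjugate r ! i else 0) = length (filter (\<lambda>x. i < x) r)"
proof (induction r arbitrary: i rule: conjugate.induct)
  case (1 r)
  show ?case
  proof (cases "\<forall>x\<in>set r. x = 0")
    case True
    then show ?thesis by (auto simp: filter_empty_conv)
  next
    case False
    show ?thesis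
    proof (cases i)
      case 0
      then show ?thesis using False by (simp add: conjugate_not_all_zero)
    next
      case (Suc i')
      let ?r' = "map (\<lambda>x. x - 1) r"
      have "(if i < length (conjugate r) then conjugate r ! i else 0) =
          (if i' < length (conjugate ?r') then conjugate ?r' ! i' else 0)"
        unfolding conjugate_not_all_zero[OF False] Suc by simp
      also have "\<dots> = length (filter (\<lambda>x. i' < x) ?r')"
        by (rule 1[OF False])
      also have "\<dots> = length (filter (\<lambda>x. i < x) r)"
        by (simp add: Suc filter_map o_def less_diff_conv)
      finally show ?thesis .
    qed
  qed
qed

lemma inj_on_conjugate: "inj_on conjugate (partitions n)"
proof (rule inj_onI)
  fix r r' assume r: "r \<in> partitions n" "r' \<in> partitions n" and eq: "conjugate r = conjugate r'"
  have greater: "length (filter (\<lambda>x. i < x) r) = length (filter (\<lambda>x. i < x) r')" for i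
  proof -
    have "length (filter (\<lambda>x. i < x) r) = (if i < length (conjugate r) then conjugate r ! i else 0)"
      by (rule nth_conjugate[symmetric])
    also have "\<dots> = length (filter (\<lambda>x. i < x) r')"
      unfolding eq by (rule nth_conjugate)
    finally show ?thesis .
  qed
  have split: "length (filter (\<lambda>x. v - 1 < x) s) = count_list s v + length (filter (\<lambda>x. v < x) s)"
    if "0 < v" for v and s :: "nat list"
    using that by (induction s) auto
  have "count (mset r) v = count (mset r') v" for v
  proof (cases "v = 0")
    case True
    have "count (mset r) 0 = 0" "count (mset r') 0 = 0"
      using r by (simp_all add: partitions_def count_eq_zero_iff)
    then show ?thesis
      by (simp only: True)
  next
    case False
    then show ?thesis
      using split[of v r] split[of v r'] greater[of "v - 1"] greater[of v] by (simp add: count_mset)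
  qed
  then show "r = r'"
    using partitions_eq_if_mset_eq r by (blast intro: multiset_eqI)
qed

lemma bij_betw_conjugate: "bij_betw conjugate (partitions n) (partitions n)"
proof -
  have "conjugate ` partitions n \<subseteq> partitions n"
    using conjugate_in_partitions by (auto simp: partitions_def)
  then show ?thesis
    using endo_inj_surj[OF finite_partitions _ inj_on_conjugate] inj_on_conjugate
    by (simp add: bij_betw_def)
qed

lemma decr_rows_pos_rows: "decr_rows r (pos_rows r) = map (\<lambda>x. x - 1) r"
  by (rule nth_equalityI) (auto simp: pos_rows_def)

lemma length_filter_pos: "length (filter (\<lambda>x. 0 < x) r) = card (pos_rows r)"
  by (simp add: pos_rows_def length_filter_conv_card)

lemma conjugate_Cons_pos_rows:
  "\<not> (\<forall>x\<in>set r. x = 0) \<Longrightarrow> conjugate r = card (pos_rows r) # conjugate (decr_rows r (pos_rows r))"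
  by (simp add: conjugate_not_all_zero decr_rows_pos_rows length_filter_pos)

lemma emcoeff_conjugate_pos: "0 < emcoeff r (conjugate r)"
proof (induction r rule: conjugate.induct)
  case (1 r)
  show ?case
  proof (cases "\<forall>x\<in>set r. x = 0")
    case True
    then show ?thesis by (simp add: emcoeff_Nil)
  next
    case False
    let ?S = "pos_rows r"
    have "0 < emcoeff (decr_rows r ?S) (conjugate (decr_rows r ?S))"
      using 1[OF False] by (simp add: decr_rows_pos_rows)
    also have "\<dots> \<le>
        (\<Sum>S\<in>first_col_supports r (card ?S). emcoeff (decr_rows r S) (conjugate (decr_rows r ?S)))"
      by (rule member_le_sum) (simp_all add: first_col_supports_def)
    finally show ?thesis
      by (simp add: conjugate_Cons_pos_rows[OF False] emcoeff_Cons)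
  qed
qed

text \<open>Lexicographic dominance: a 0-1 matrix with row sums \<open>r\<close> and column sums \<open>c\<close> exists only
  if \<open>c\<close> is lexicographically at most the conjugate of \<open>r\<close>, since the first column has at
  most as many ones as \<open>r\<close> has nonzero entries, with equality only if it meets every such row.\<close>
lemma emcoeff_pos_imp_le_conjugate: "0 \<notin> set c \<Longrightarrow> 0 < emcoeff r c \<Longrightarrow> c \<le> conjugate r"
proof (induction c arbitrary: r)
  case Nil
  then show ?case by simp
next
  case (Cons a c)
  have "\<exists>S\<in>first_col_supports r a. 0 < emcoeff (decr_rows r S) c"
  proof (rule ccontr)
    assume "\<not> ?thesis"
    then have "(\<Sum>S\<in>first_col_supports r a. emcoeff (decr_rows r S) c) = 0"
      by simp
    with Cons.prems(2) show False
      by (simp add: emcoeff_Cons)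
  qed
  then obtain S where S: "S \<in> first_col_supports r a" "0 < emcoeff (decr_rows r S) c"
    by blast
  then have S_sub: "S \<subseteq> pos_rows r" "card S = a"
    by (auto simp: first_col_supports_def)
  then have "pos_rows r \<noteq> {}"
    using Cons.prems(1) by auto
  then have nz: "\<not> (\<forall>x\<in>set r. x = 0)"
    by (auto simp: pos_rows_def)
  have le: "a \<le> card (pos_rows r)"
    using S_sub card_mono[OF finite_pos_rows] by blast
  show ?case
  proof (cases "a < card (pos_rows r)")
    case True
    then show ?thesis by (simp add: conjugate_Cons_pos_rows[OF nz])
  next
    case False
    then have a: "a = card (pos_rows r)"
      using le by simp
    then have "S = pos_rows r"
      using S_sub card_subset_eq[OF finite_pos_rows] by metis
    then have "c \<le> conjugate (decr_rows r (pos_rows r))"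
      using Cons.IH[of "decr_rows r (pos_rows r)"] Cons.prems(1) S(2) by simp
    then show ?thesis
      using a by (simp add: conjugate_Cons_pos_rows[OF nz])
  qed
qed

lemma triangular_solvable:
  fixes Q :: "'a::linorder set" and A :: "'a \<Rightarrow> 'a \<Rightarrow> 'b::field"
  assumes "finite Q" "\<forall>x\<in>Q. \<forall>k\<in>Q. A x k \<noteq> 0 \<longrightarrow> k \<le> x" "\<forall>x\<in>Q. A x x \<noteq> 0"
  shows "\<exists>g. \<forall>k\<in>Q. (\<Sum>x\<in>Q. g x * A x k) = b k"
  using assms
proof (induction Q rule: finite_linorder_min_induct)
  case empty
  then show ?case by simp
next
  case (insert t Q)
  obtain g where g: "\<forall>k\<in>Q. (\<Sum>x\<in>Q. g x * A x k) = b k"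
    using insert by auto
  have t: "t \<notin> Q" "A t t \<noteq> 0" "\<forall>k\<in>Q. A t k = 0"
    using insert by (auto dest: leD)
  define g' where "g' = g(t := (b t - (\<Sum>x\<in>Q. g x * A x t)) / A t t)"
  have "(\<Sum>x\<in>Q. g' x * A x k) = (\<Sum>x\<in>Q. g x * A x k)" for k
    using t(1) by (intro sum.cong) (auto simp: g'_def)
  then have "\<forall>k\<in>insert t Q. (\<Sum>x\<in>insert t Q. g' x * A x k) = b k"
    using g t insert.hyps(1) by (auto simp: g'_def)
  then show ?case by blast
qed

lemma triangular_kernel_trivial:
  fixes Q :: "'a::linorder set" and A :: "'a \<Rightarrow> 'a \<Rightarrow> 'b::field"
  assumes "finite Q" "\<forall>x\<in>Q. \<forall>k\<in>Q. A x k \<noteq> 0 \<longrightarrow> k \<le> x" "\<forall>x\<in>Q. A x x \<noteq> 0"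
    and "\<forall>k\<in>Q. (\<Sum>x\<in>Q. g x * A x k) = 0"
  shows "\<forall>x\<in>Q. g x = 0"
  using assms
proof (induction Q rule: finite_linorder_min_induct)
  case empty
  then show ?case by simp
next
  case (insert t Q)
  have t: "t \<notin> Q" "A t t \<noteq> 0" "\<forall>k\<in>Q. A t k = 0"
    using insert by (auto dest: leD)
  have sum_insert: "(\<Sum>x\<in>insert t Q. g x * A x k) = g t * A t k + (\<Sum>x\<in>Q. g x * A x k)" for k
    using t(1) insert.hyps(1) by simp
  then have "\<forall>x\<in>Q. g x = 0"
    using insert t(3) by auto
  moreover from this have "g t * A t t = 0"
    using insert.prems(3) sum_insert[of t] by simp
  ultimately show ?case
    using t(2) by simp
qed

lemma permuted_triangular_reindex:
  fixes A :: "'a::order \<Rightarrow> 'a \<Rightarrow> 'b::field"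
  assumes \<sigma>: "bij_betw \<sigma> Q Q"
    and tri: "\<forall>x\<in>Q. \<forall>k\<in>Q. A x k \<noteq> 0 \<longrightarrow> k \<le> \<sigma> x" and diag: "\<forall>x\<in>Q. A x (\<sigma> x) \<noteq> 0"
  defines "\<tau> \<equiv> the_inv_into Q \<sigma>"
  shows "\<forall>z\<in>Q. \<forall>k\<in>Q. A (\<tau> z) k \<noteq> 0 \<longrightarrow> k \<le> z" "\<forall>z\<in>Q. A (\<tau> z) z \<noteq> 0"
    and "(\<Sum>y\<in>Q. f y * A y k) = (\<Sum>z\<in>Q. f (\<tau> z) * A (\<tau> z) k)"
proof -
  have \<tau>: "\<tau> z \<in> Q" "\<sigma> (\<tau> z) = z" if "z \<in> Q" for z
    using that \<sigma> by (auto simp: \<tau>_def bij_betw_def the_inv_into_into f_the_inv_into_f)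
  show "\<forall>z\<in>Q. \<forall>k\<in>Q. A (\<tau> z) k \<noteq> 0 \<longrightarrow> k \<le> z"
  proof (intro ballI impI)
    fix z k assume "z \<in> Q" "k \<in> Q" "A (\<tau> z) k \<noteq> 0"
    with tri \<tau>(1) have "k \<le> \<sigma> (\<tau> z)" by blast
    with \<tau>(2) \<open>z \<in> Q\<close> show "k \<le> z" by simp
  qed
  show "\<forall>z\<in>Q. A (\<tau> z) z \<noteq> 0"
  proof
    fix z assume "z \<in> Q"
    with diag \<tau>(1) have "A (\<tau> z) (\<sigma> (\<tau> z)) \<noteq> 0" by blast
    with \<tau>(2) \<open>z \<in> Q\<close> show "A (\<tau> z) z \<noteq> 0" by simp
  qed
  have "(\<Sum>y\<in>Q. f y * A y k) = (\<Sum>y\<in>Q. f (\<tau> (\<sigma> y)) * A (\<tau> (\<sigma> y)) k)"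
    using \<sigma> by (intro sum.cong) (simp_all add: \<tau>_def bij_betw_def the_inv_into_f_f)
  also have "\<dots> = (\<Sum>z\<in>Q. f (\<tau> z) * A (\<tau> z) k)"
    by (rule sum.reindex_bij_betw[OF \<sigma>])
  finally show "(\<Sum>y\<in>Q. f y * A y k) = (\<Sum>z\<in>Q. f (\<tau> z) * A (\<tau> z) k)" .
qed

lemma permuted_triangular_solvable:
  fixes Q :: "'a::linorder set" and A :: "'a \<Rightarrow> 'a \<Rightarrow> 'b::field"
  assumes Q: "finite Q" and \<sigma>: "bij_betw \<sigma> Q Q"
    and tri: "\<forall>x\<in>Q. \<forall>k\<in>Q. A x k \<noteq> 0 \<longrightarrow> k \<le> \<sigma> x" and diag: "\<forall>x\<in>Q. A x (\<sigma> x) \<noteq> 0"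
  shows "\<exists>g. \<forall>k\<in>Q. (\<Sum>y\<in>Q. g y * A y k) = b k"
proof -
  let ?\<tau> = "the_inv_into Q \<sigma>"
  note reindex = permuted_triangular_reindex[OF \<sigma> tri diag]
  obtain g where g: "\<forall>k\<in>Q. (\<Sum>z\<in>Q. g z * A (?\<tau> z) k) = b k"
    using triangular_solvable[OF Q reindex(1,2)] by blast
  have "(\<Sum>y\<in>Q. g (\<sigma> y) * A y k) = (\<Sum>z\<in>Q. g z * A (?\<tau> z) k)" for k
    unfolding reindex(3) using \<sigma> by (intro sum.cong) (simp_all add: f_the_inv_into_f_bij_betw)
  with g show ?thesis
    by (intro exI[of _ "\<lambda>y. g (\<sigma> y)"]) simp
qed

lemma permuted_triangular_kernel_trivial:
  fixes Q :: "'a::linorder set" and A :: "'a \<Rightarrow> 'a \<Rightarrow> 'b::field"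
  assumes Q: "finite Q" and \<sigma>: "bij_betw \<sigma> Q Q"
    and tri: "\<forall>x\<in>Q. \<forall>k\<in>Q. A x k \<noteq> 0 \<longrightarrow> k \<le> \<sigma> x" and diag: "\<forall>x\<in>Q. A x (\<sigma> x) \<noteq> 0"
    and g: "\<forall>k\<in>Q. (\<Sum>y\<in>Q. g y * A y k) = 0"
  shows "\<forall>y\<in>Q. g y = 0"
proof -
  let ?\<tau> = "the_inv_into Q \<sigma>"
  note reindex = permuted_triangular_reindex[OF \<sigma> tri diag]
  have "(\<Sum>z\<in>Q. g (?\<tau> z) * A (?\<tau> z) k) = (\<Sum>y\<in>Q. g y * A y k)" for k
    by (rule reindex(3)[symmetric])
  then have "\<forall>k\<in>Q. (\<Sum>z\<in>Q. g (?\<tau> z) * A (?\<tau> z) k) = 0"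
    using g by simp
  then have g_\<tau>: "\<forall>z\<in>Q. g (?\<tau> z) = 0"
    by (rule triangular_kernel_trivial[OF Q reindex(1,2)])
  show ?thesis
  proof
    fix y assume y: "y \<in> Q"
    then have "g (?\<tau> (\<sigma> y)) = 0"
      using g_\<tau> bij_betw_apply[OF \<sigma> y] by blast
    moreover have "?\<tau> (\<sigma> y) = y"
      using \<sigma> y by (simp add: bij_betw_def the_inv_into_f_f)
    ultimately show "g y = 0"
      by simp
  qed
qed

lemma permuted_triangular_left_inverse:
  fixes Q :: "'a::linorder set" and A :: "'a \<Rightarrow> 'a \<Rightarrow> 'b::field"
  assumes Q: "finite Q" and \<sigma>: "bij_betw \<sigma> Q Q"
    and tri: "\<forall>x\<in>Q. \<forall>k\<in>Q. A x k \<noteq> 0 \<longrightarrow> k \<le> \<sigma> x" and diag: "\<forall>x\<in>Q. A x (\<sigma> x) \<noteq> 0"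
  shows "\<exists>!G. (\<forall>x y. x \<notin> Q \<or> y \<notin> Q \<longrightarrow> G x y = 0) \<and>
    (\<forall>x\<in>Q. \<forall>k\<in>Q. (\<Sum>y\<in>Q. G x y * A y k) = (if x = k then 1 else 0))"
proof -
  have "\<forall>x\<in>Q. \<exists>g. \<forall>k\<in>Q. (\<Sum>y\<in>Q. g y * A y k) = (if x = k then 1 else 0)"
    by (intro ballI permuted_triangular_solvable[OF Q \<sigma> tri diag])
  from bchoice[OF this] obtain g
    where g: "\<forall>x\<in>Q. \<forall>k\<in>Q. (\<Sum>y\<in>Q. g x y * A y k) = (if x = k then 1 else 0)"
    by blast
  define G where "G x y = (if x \<in> Q \<and> y \<in> Q then g x y else 0)" for x y
  have G: "(\<Sum>y\<in>Q. G x y * A y k) = (if x = k then 1 else 0)" if "x \<in> Q" "k \<in> Q" for x k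
    using g that by (simp add: G_def)
  have unique: "G' x y = G x y"
    if "(\<forall>x y. x \<notin> Q \<or> y \<notin> Q \<longrightarrow> G' x y = 0) \<and>
      (\<forall>x\<in>Q. \<forall>k\<in>Q. (\<Sum>y\<in>Q. G' x y * A y k) = (if x = k then 1 else 0))" for G' x y
  proof (cases "x \<in> Q \<and> y \<in> Q")
    case True
    have "\<forall>k\<in>Q. (\<Sum>y\<in>Q. (G' x y - G x y) * A y k) = 0"
      using that G True by (simp add: left_diff_distrib sum_subtractf)
    then have "\<forall>y\<in>Q. G' x y - G x y = 0"
      by (rule permuted_triangular_kernel_trivial[OF Q \<sigma> tri diag])
    then show ?thesis
      using True by simp
  qed (use that in \<open>auto simp: G_def\<close>)
  show ?thesis
  proof (rule ex1I[of _ G])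
    fix G' assume "(\<forall>x y. x \<notin> Q \<or> y \<notin> Q \<longrightarrow> G' x y = 0) \<and>
      (\<forall>x\<in>Q. \<forall>k\<in>Q. (\<Sum>y\<in>Q. G' x y * A y k) = (if x = k then 1 else 0))"
    then show "G' = G"
      by (intro ext) (rule unique)
  qed (use G in \<open>simp add: G_def\<close>)
qed

lemma me_coeff_left_inverse:
  assumes "lam \<in> partitions n" "ka \<in> partitions n"
  shows "(\<Sum>nu\<in>partitions n. me_coeff n lam nu * real (emcoeff nu ka)) = (if lam = ka then 1 else 0)"
proof -
  have "\<exists>!G. (\<forall>lam nu. (lam \<notin> partitions n \<or> nu \<notin> partitions n) \<longrightarrow> G lam nu = 0) \<and>
      (\<forall>lam\<in>partitions n. \<forall>ka\<in>partitions n.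
        (\<Sum>nu\<in>partitions n. G lam nu * real (emcoeff nu ka)) = (if lam = ka then 1 else 0))"
  proof (rule permuted_triangular_left_inverse[OF finite_partitions bij_betw_conjugate])
    show "\<forall>nu\<in>partitions n. \<forall>ka\<in>partitions n. real (emcoeff nu ka) \<noteq> 0 \<longrightarrow> ka \<le> conjugate nu"
    proof (intro ballI impI)
      fix nu ka assume "ka \<in> partitions n" "real (emcoeff nu ka) \<noteq> 0"
      then show "ka \<le> conjugate nu"
        by (intro emcoeff_pos_imp_le_conjugate) (simp_all add: partitions_def)
    qed
    show "\<forall>nu\<in>partitions n. real (emcoeff nu (conjugate nu)) \<noteq> 0"
    proof
      fix nu show "real (emcoeff nu (conjugate nu)) \<noteq> 0"
        using emcoeff_conjugate_pos[of nu] by simp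
    qed
  qed
  then have "\<forall>lam\<in>partitions n. \<forall>ka\<in>partitions n.
      (\<Sum>nu\<in>partitions n. me_coeff n lam nu * real (emcoeff nu ka)) = (if lam = ka then 1 else 0)"
    unfolding me_coeff_def by (rule theI'[THEN conjunct2])
  then show ?thesis
    using assms by blast
qed

section \<open>Expansion over compositions\<close>

definition comp_sign :: "nat list \<Rightarrow> real" where
  "comp_sign w = (-1) ^ (sum_list w - length w)"

fun suffix_sums :: "nat list \<Rightarrow> nat set" where
  "suffix_sums [] = {}"
| "suffix_sums (a # w) = insert (a + sum_list w) (suffix_sums w)"

lemma finite_suffix_sums [simp]: "finite (suffix_sums w)"
  by (induction w) simp_all

lemma suffix_sums_subset: "0 \<notin> set w \<Longrightarrow> suffix_sums w \<subseteq> {1..sum_list w}"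
  by (induction w) auto

lemma card_suffix_sums: "0 \<notin> set w \<Longrightarrow> card (suffix_sums w) = length w"
proof (induction w)
  case (Cons a w)
  then have "a + sum_list w \<notin> suffix_sums w"
    using suffix_sums_subset[of w] by auto
  with Cons show ?case by simp
qed simp

lemma prod_suffix_sums_Cons:
  assumes "0 < a" "0 \<notin> set w"
  shows "(\<Prod>u\<in>suffix_sums (a # w). f u) = f (a + sum_list w) * (\<Prod>u\<in>suffix_sums w. f u)"
proof -
  have "a + sum_list w \<notin> suffix_sums w"
    using assms suffix_sums_subset[of w] by auto
  then show ?thesis by simp
qed

lemma comp_sign_Cons:
  assumes "0 < a" "0 \<notin> set w"
  shows "comp_sign (a # w) = (-1) ^ (a - 1) * comp_sign w"
proof -
  have "sum_list (a # w) - length (a # w) = (a - 1) + (sum_list w - length w)"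
    using assms length_le_sum_list[of w] by simp
  then show ?thesis by (simp add: comp_sign_def power_add)
qed

lemma compositions_0: "compositions 0 = {[]}"
  by (auto simp: compositions_def sum_list_eq_0_iff) (metis list.set_intros(1) neq_Nil_conv)

lemma compositions_eq_Union_Cons:
  assumes "0 < n"
  shows "compositions n = (\<Union>a\<in>{1..n}. Cons a ` compositions (n - a))"
proof (intro equalityI subsetI)
  fix w assume w: "w \<in> compositions n"
  then obtain a w' where "w = a # w'"
    using assms by (cases w) (auto simp: compositions_def)
  moreover from this have "a \<in> {1..n}" "w' \<in> compositions (n - a)"
    using w by (auto simp: compositions_def)
  ultimately show "w \<in> (\<Union>a\<in>{1..n}. Cons a ` compositions (n - a))"
    by blast
qed (auto simp: compositions_def)

lemma sum_list_decr_rows: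
  assumes "S \<subseteq> pos_rows r"
  shows "sum_list (decr_rows r S) = sum_list r - card S"
proof -
  have S: "S \<subseteq> {..<length r}"
    using assms by (auto simp: pos_rows_def)
  have "sum_list (decr_rows r S) = (\<Sum>i<length r. r ! i - (if i \<in> S then 1 else 0))"
    by (simp add: sum_list_sum_nth lessThan_atLeast0)
  also have "\<dots> = (\<Sum>i<length r. r ! i) - (\<Sum>i<length r. if i \<in> S then 1 else 0)"
    using assms by (intro sum_subtractf_nat) (auto simp: pos_rows_def)
  also have "(\<Sum>i<length r. if i \<in> S then 1 else 0) = card S"
    using S by (simp add: sum.If_cases Int_absorb1)
  finally show ?thesis
    by (simp add: sum_list_sum_nth lessThan_atLeast0)
qed

lemma sum_pos_rows: "(\<Sum>i\<in>pos_rows r. r ! i) = sum_list r"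
proof -
  have "(\<Sum>i\<in>pos_rows r. r ! i) = (\<Sum>i<length r. r ! i)"
    by (intro sum.mono_neutral_left) (auto simp: pos_rows_def)
  then show ?thesis
    by (simp add: sum_list_sum_nth lessThan_atLeast0)
qed

lemma card_pos_rows_le: "card (pos_rows r) \<le> sum_list r"
proof -
  have "card (pos_rows r) = (\<Sum>i\<in>pos_rows r. 1)"
    by simp
  also have "\<dots> \<le> (\<Sum>i\<in>pos_rows r. r ! i)"
    by (intro sum_mono) (auto simp: pos_rows_def)
  finally show ?thesis
    by (simp add: sum_pos_rows)
qed

lemma Union_first_col_supports:
  "(\<Union>a\<in>{1..sum_list r}. first_col_supports r a) = Pow (pos_rows r) - {{}}"
proof (intro equalityI subsetI)
  fix S assume S: "S \<in> Pow (pos_rows r) - {{}}"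
  then have "card S \<le> card (pos_rows r)" "0 < card S"
    by (auto intro: card_mono simp: card_gt_0_iff finite_subset)
  then have "card S \<in> {1..sum_list r}"
    using card_pos_rows_le[of r] by simp
  with S show "S \<in> (\<Union>a\<in>{1..sum_list r}. first_col_supports r a)"
    by (auto simp: first_col_supports_def)
qed (auto simp: first_col_supports_def)

lemma sum_nonempty_subsets_alternating:
  fixes c :: "'a \<Rightarrow> 'b::comm_ring_1"
  assumes "finite A"
  shows "(\<Sum>S\<in>Pow A - {{}}. (-1) ^ (card S - 1) * prod c S) = 1 - (\<Prod>i\<in>A. 1 - c i)"
proof -
  have "(\<Prod>i\<in>A. 1 - c i) = (\<Sum>S\<in>Pow A. prod (\<lambda>i. - c i) S * prod (\<lambda>i. 1) (A - S))"
    using prod_add[OF assms, of "\<lambda>i. - c i" "\<lambda>i. 1"] by simp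
  also have "\<dots> = (\<Sum>S\<in>Pow A. (-1) ^ card S * prod c S)"
    by (intro sum.cong refl) (simp add: prod_uminus)
  also have "\<dots> = 1 + (\<Sum>S\<in>Pow A - {{}}. (-1) ^ card S * prod c S)"
    using assms by (simp add: sum.remove[of "Pow A" "{}"])
  also have "(\<Sum>S\<in>Pow A - {{}}. (-1) ^ card S * prod c S) =
      - (\<Sum>S\<in>Pow A - {{}}. (-1) ^ (card S - 1) * prod c S)"
  proof -
    have "(-1) ^ card S = - ((-1) ^ (card S - 1) :: 'b)" if "S \<in> Pow A - {{}}" for S
    proof -
      have "0 < card S"
        using that assms by (auto simp: card_gt_0_iff finite_subset)
      then have "card S = Suc (card S - 1)"
        by simp
      then show ?thesis by (metis power_Suc mult_minus1)
    qed
    then show ?thesis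
      by (simp add: sum_negf)
  qed
  finally show ?thesis by simp
qed

lemma prod_inv_qpoch_decr_rows:
  fixes q :: real
  assumes q: "0 < q" "q < 1" and S: "S \<subseteq> pos_rows r"
  shows "(\<Prod>k\<leftarrow>decr_rows r S. 1 / qpoch q k) = (\<Prod>k\<leftarrow>r. 1 / qpoch q k) * (\<Prod>i\<in>S. 1 - q ^ (r ! i))"
proof -
  have nth_form: "(\<Prod>k\<leftarrow>xs. f k) = (\<Prod>i<length xs. f (xs ! i))" for xs and f :: "nat \<Rightarrow> real"
    by (simp add: prod.list_conv_set_nth lessThan_atLeast0)
  have step: "1 / qpoch q (r ! i - (if i \<in> S then 1 else 0)) =
      1 / qpoch q (r ! i) * (if i \<in> S then 1 - q ^ (r ! i) else 1)"
    if "i < length r" for i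
  proof (cases "i \<in> S")
    case True
    then obtain m where m: "r ! i = Suc m"
      using S by (auto simp: pos_rows_def gr0_conv_Suc)
    have "q ^ Suc m < 1"
      using q by (simp add: power_less_one_iff del: power_Suc)
    then show ?thesis
      using True m that qpoch_pos[OF q, of m] by (simp add: qpoch_Suc del: power_Suc)
  qed simp
  have "(\<Prod>k\<leftarrow>decr_rows r S. 1 / qpoch q k) =
      (\<Prod>i<length r. 1 / qpoch q (r ! i) * (if i \<in> S then 1 - q ^ (r ! i) else 1))"
    unfolding nth_form by (intro prod.cong) (simp_all add: step)
  also have "\<dots> = (\<Prod>i<length r. 1 / qpoch q (r ! i)) *
      (\<Prod>i<length r. if i \<in> S then 1 - q ^ (r ! i) else 1)"
    by (rule prod.distrib)
  also have "(\<Prod>i<length r. if i \<in> S then 1 - q ^ (r ! i) else 1) = (\<Prod>i\<in>S. 1 - q ^ (r ! i))"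
    using S by (simp add: prod.If_cases Int_absorb1 pos_rows_def subset_iff)
  finally show ?thesis
    by (simp add: nth_form)
qed

lemma alternating_sum_decr_rows:
  fixes q :: real
  assumes q: "0 < q" "q < 1"
  shows "(\<Sum>a\<in>{1..sum_list r}. (-1) ^ (a - 1) *
      (\<Sum>S\<in>first_col_supports r a. \<Prod>k\<leftarrow>decr_rows r S. 1 / qpoch q k)) =
    (1 - q ^ sum_list r) * (\<Prod>k\<leftarrow>r. 1 / qpoch q k)"
proof -
  let ?P = "\<lambda>r. \<Prod>k\<leftarrow>r. 1 / qpoch q k"
  have "(\<Sum>a\<in>{1..sum_list r}. (-1) ^ (a - 1) * (\<Sum>S\<in>first_col_supports r a. ?P (decr_rows r S))) =
      (\<Sum>a\<in>{1..sum_list r}. \<Sum>S\<in>first_col_supports r a. (-1) ^ (card S - 1) * ?P (decr_rows r S))"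
    by (simp add: sum_distrib_left first_col_supports_def)
  also have "\<dots> = (\<Sum>S\<in>Pow (pos_rows r) - {{}}. (-1) ^ (card S - 1) * ?P (decr_rows r S))"
    unfolding Union_first_col_supports[symmetric]
    by (rule sum.UNION_disjoint[symmetric]) (auto simp: first_col_supports_def)
  also have "\<dots> = ?P r * (\<Sum>S\<in>Pow (pos_rows r) - {{}}. (-1) ^ (card S - 1) * (\<Prod>i\<in>S. 1 - q ^ (r ! i)))"
    unfolding sum_distrib_left by (intro sum.cong refl) (simp add: prod_inv_qpoch_decr_rows[OF q])
  also have "(\<Sum>S\<in>Pow (pos_rows r) - {{}}. (-1) ^ (card S - 1) * (\<Prod>i\<in>S. 1 - q ^ (r ! i))) =
      1 - (\<Prod>i\<in>pos_rows r. q ^ (r ! i))"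
    using sum_nonempty_subsets_alternating[of "pos_rows r" "\<lambda>i. 1 - q ^ (r ! i)"] by simp
  also have "(\<Prod>i\<in>pos_rows r. q ^ (r ! i)) = q ^ sum_list r"
    by (simp add: power_sum[symmetric] sum_pos_rows)
  finally show ?thesis
    by simp
qed

lemma expansion_term_Cons:
  fixes q :: real
  assumes "0 < a" "0 \<notin> set w"
  shows "real (emcoeff r (a # w)) * comp_sign (a # w) / (\<Prod>u\<in>suffix_sums (a # w). 1 - q ^ u) =
    (-1) ^ (a - 1) / (1 - q ^ (a + sum_list w)) * (\<Sum>S\<in>first_col_supports r a.
      real (emcoeff (decr_rows r S) w) * comp_sign w / (\<Prod>u\<in>suffix_sums w. 1 - q ^ u))"
  unfolding prod_suffix_sums_Cons[OF assms] comp_sign_Cons[OF assms] emcoeff_Cons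
  by (simp add: sum_distrib_left sum_distrib_right sum_divide_distrib mult_ac)

definition composition_expansion :: "real \<Rightarrow> nat list \<Rightarrow> real" where
  "composition_expansion q r = (\<Sum>w\<in>compositions (sum_list r).
     real (emcoeff r w) * comp_sign w / (\<Prod>u\<in>suffix_sums w. 1 - q ^ u))"

lemma sum_compositions_Cons:
  "0 < n \<Longrightarrow> (\<Sum>w\<in>compositions n. f w) = (\<Sum>a\<in>{1..n}. \<Sum>w\<in>compositions (n - a). f (a # w))"
  unfolding compositions_eq_Union_Cons
  by (subst sum.UNION_disjoint) (auto simp: finite_compositions sum.reindex)

lemma composition_expansion_recursion:
  assumes "0 < sum_list r"
  shows "composition_expansion q r = (\<Sum>a\<in>{1..sum_list r}. (-1) ^ (a - 1) / (1 - q ^ sum_list r) *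
    (\<Sum>S\<in>first_col_supports r a. composition_expansion q (decr_rows r S)))"
proof -
  let ?n = "sum_list r"
  let ?E = "\<lambda>r w. real (emcoeff r w) * comp_sign w / (\<Prod>u\<in>suffix_sums w. 1 - q ^ u)"
  have "composition_expansion q r = (\<Sum>a\<in>{1..?n}. \<Sum>w\<in>compositions (?n - a). ?E r (a # w))"
    unfolding composition_expansion_def using assms by (rule sum_compositions_Cons)
  also have "\<dots> = (\<Sum>a\<in>{1..?n}. (-1) ^ (a - 1) / (1 - q ^ ?n) *
      (\<Sum>S\<in>first_col_supports r a. composition_expansion q (decr_rows r S)))"
  proof (intro sum.cong refl)
    fix a assume a: "a \<in> {1..?n}"
    have "?E r (a # w) = (-1) ^ (a - 1) / (1 - q ^ ?n) *
        (\<Sum>S\<in>first_col_supports r a. ?E (decr_rows r S) w)" if "w \<in> compositions (?n - a)" for w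
      using a that expansion_term_Cons[of a w r q] by (simp add: compositions_def)
    moreover have "sum_list (decr_rows r S) = ?n - a" if "S \<in> first_col_supports r a" for S
      using that by (simp add: first_col_supports_def sum_list_decr_rows)
    ultimately show "(\<Sum>w\<in>compositions (?n - a). ?E r (a # w)) = (-1) ^ (a - 1) / (1 - q ^ ?n) *
        (\<Sum>S\<in>first_col_supports r a. composition_expansion q (decr_rows r S))"
      by (simp add: composition_expansion_def sum_distrib_left
          sum.swap[of _ "compositions (?n - a)"])
  qed
  finally show ?thesis .
qed

text \<open>In the induction step the recursion produces, up to the factor \<open>1/(1 - q\<^sup>|\<^sup>r\<^sup>|)\<close>, an
  alternating sum over the nonempty sets \<open>S\<close> of positive rows; as lowering \<open>r\<^sub>i\<close> by one multiplies
  \<open>1/(q;q)\<^bsub>r\<^sub>i\<^esub>\<close> by \<open>1 - q\<^bsup>r\<^sub>i\<^esup>\<close>, inclusion-exclusion sums it to \<open>(1 - q\<^sup>|\<^sup>r\<^sup>|) \<Prod>\<^sub>i 1/(q;q)\<^bsub>r\<^sub>i\<^esub>\<close>.\<close>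
lemma prod_inv_qpoch_eq_composition_expansion:
  fixes q :: real
  assumes q: "0 < q" "q < 1"
  shows "(\<Prod>k\<leftarrow>r. 1 / qpoch q k) = composition_expansion q r"
proof (induction "sum_list r" arbitrary: r rule: less_induct)
  case less
  show ?case
  proof (cases "sum_list r = 0")
    case True
    then have zero: "\<forall>x\<in>set r. x = 0"
      by (simp add: sum_list_eq_0_iff)
    then have "(\<Prod>k\<leftarrow>r. 1 / qpoch q k) = 1"
      by (induction r) (simp_all add: qpoch_def)
    with zero show ?thesis
      unfolding composition_expansion_def True
      by (simp add: compositions_0 emcoeff_Nil comp_sign_def)
  next
    case False
    then have "0 < sum_list r" by linarith
    have "composition_expansion q r = (\<Sum>a\<in>{1..sum_list r}. (-1) ^ (a - 1) / (1 - q ^ sum_list r) *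
        (\<Sum>S\<in>first_col_supports r a. \<Prod>k\<leftarrow>decr_rows r S. 1 / qpoch q k))"
      unfolding composition_expansion_recursion[OF \<open>0 < sum_list r\<close>]
    proof (intro sum.cong refl arg_cong2[where f = "(*)"])
      fix a S assume "a \<in> {1..sum_list r}" "S \<in> first_col_supports r a"
      then have "sum_list (decr_rows r S) < sum_list r"
        by (simp add: first_col_supports_def sum_list_decr_rows)
      then show "composition_expansion q (decr_rows r S) = (\<Prod>k\<leftarrow>decr_rows r S. 1 / qpoch q k)"
        using less.hyps by simp
    qed
    also have "\<dots> = (\<Prod>k\<leftarrow>r. 1 / qpoch q k)"
    proof -
      have "q ^ sum_list r < 1"
        using q \<open>0 < sum_list r\<close> by (simp add: power_less_one_iff)
      then show ?thesis
        using alternating_sum_decr_rows[OF q, of r] by (simp add: sum_divide_distrib[symmetric])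
    qed
    finally show ?thesis ..
  qed
qed

section \<open>The forgotten functions at \<open>1, q, q\<^sup>2, ...\<close>\<close>

definition rearrangement_sum :: "real \<Rightarrow> nat list \<Rightarrow> real" where
  "rearrangement_sum q nu =
    (\<Sum>w\<in>permutations_of_multiset (mset nu). comp_sign w / (\<Prod>u\<in>suffix_sums w. 1 - q ^ u))"

lemma compositions_eq_Union_permutations:
  "compositions m = (\<Union>nu\<in>partitions m. permutations_of_multiset (mset nu))"
proof (intro equalityI subsetI)
  fix w assume w: "w \<in> compositions m"
  define nu where "nu = rev (sorted_list_of_multiset (mset w))"
  have "nu \<in> partitions m"
    using w rev_sorted_list_of_multiset_in_partitions[of "mset w"]
    by (simp add: nu_def compositions_def sum_mset_sum_list)
  moreover have "w \<in> permutations_of_multiset (mset nu)"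
    by (simp add: nu_def permutations_of_multiset_def)
  ultimately show "w \<in> (\<Union>nu\<in>partitions m. permutations_of_multiset (mset nu))"
    by blast
next
  fix w assume "w \<in> (\<Union>nu\<in>partitions m. permutations_of_multiset (mset nu))"
  then obtain nu where nu: "nu \<in> partitions m" "mset w = mset nu"
    by (auto simp: permutations_of_multiset_def)
  then have "set w = set nu" "sum_list w = sum_list nu"
    by (metis set_mset_mset, metis sum_mset_sum_list)
  with nu(1) show "w \<in> compositions m"
    by (simp add: partitions_def compositions_def)
qed

lemma prod_inv_qpoch_eq_emcoeff_sum:
  fixes q :: real
  assumes q: "0 < q" "q < 1" and lam: "sum_list lam = m"
  shows "(\<Prod>k\<leftarrow>lam. 1 / qpoch q k) =
    (\<Sum>nu\<in>partitions m. real (emcoeff lam nu) * rearrangement_sum q nu)"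
proof -
  let ?E = "\<lambda>w. real (emcoeff lam w) * comp_sign w / (\<Prod>u\<in>suffix_sums w. 1 - q ^ u)"
  have "(\<Prod>k\<leftarrow>lam. 1 / qpoch q k) = (\<Sum>w\<in>compositions m. ?E w)"
    using prod_inv_qpoch_eq_composition_expansion[OF q] lam by (simp add: composition_expansion_def)
  also have "\<dots> = (\<Sum>nu\<in>partitions m. \<Sum>w\<in>permutations_of_multiset (mset nu). ?E w)"
    unfolding compositions_eq_Union_permutations
  proof (rule sum.UNION_disjoint)
    show "\<forall>nu\<in>partitions m. \<forall>nu'\<in>partitions m. nu \<noteq> nu' \<longrightarrow>
        permutations_of_multiset (mset nu) \<inter> permutations_of_multiset (mset nu') = {}"
    proof (intro ballI impI)
      fix nu nu' assume "nu \<in> partitions m" "nu' \<in> partitions m" "nu \<noteq> nu'"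
      then have "mset nu \<noteq> mset nu'"
        using partitions_eq_if_mset_eq by blast
      then show "permutations_of_multiset (mset nu) \<inter> permutations_of_multiset (mset nu') = {}"
        by (auto simp: permutations_of_multiset_def)
    qed
  qed (simp_all add: finite_partitions)
  also have "\<dots> = (\<Sum>nu\<in>partitions m. real (emcoeff lam nu) * rearrangement_sum q nu)"
    unfolding rearrangement_sum_def sum_distrib_left
  proof (intro sum.cong refl)
    fix nu w :: "nat list" assume "w \<in> permutations_of_multiset (mset nu)"
    then have "emcoeff lam w = emcoeff lam nu"
      by (intro emcoeff_mset_eq) (simp add: permutations_of_multiset_def)
    then show "?E w = real (emcoeff lam nu) * (comp_sign w / (\<Prod>u\<in>suffix_sums w. 1 - q ^ u))"
      by simp
  qed
  finally show ?thesis .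
qed

lemma forgotten_qpowers:
  fixes q :: real
  assumes q: "0 < q" "q < 1" and mu: "mu \<in> partitions m"
  shows "forgotten mu (\<lambda>i. q ^ i) = rearrangement_sum q mu"
proof -
  let ?P = "partitions m" and ?F = "rearrangement_sum q"
  have m: "sum_list mu = m"
    using mu by (simp add: partitions_def)
  have "forgotten mu (\<lambda>i. q ^ i) = (\<Sum>lam\<in>?P. me_coeff m mu lam * (\<Prod>k\<leftarrow>lam. 1 / qpoch q k))"
    by (simp add: forgotten_def m hprod_qpowers[OF q])
  also have "\<dots> = (\<Sum>lam\<in>?P. me_coeff m mu lam * (\<Sum>nu\<in>?P. real (emcoeff lam nu) * ?F nu))"
    by (intro sum.cong refl) (simp add: prod_inv_qpoch_eq_emcoeff_sum[OF q] partitions_def)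
  also have "\<dots> = (\<Sum>lam\<in>?P. \<Sum>nu\<in>?P. me_coeff m mu lam * real (emcoeff lam nu) * ?F nu)"
    by (simp add: sum_distrib_left mult.assoc)
  also have "\<dots> = (\<Sum>nu\<in>?P. (\<Sum>lam\<in>?P. me_coeff m mu lam * real (emcoeff lam nu)) * ?F nu)"
    by (subst sum.swap) (simp add: sum_distrib_right)
  also have "\<dots> = (\<Sum>nu\<in>?P. if nu = mu then ?F nu else 0)"
    using mu by (intro sum.cong refl) (simp add: me_coeff_left_inverse)
  also have "\<dots> = ?F mu"
    using mu by (simp add: finite_partitions)
  finally show ?thesis .
qed

section \<open>The polynomial \<open>\<Pi>\<^sub>\<mu>\<close>\<close>

definition qinteger :: "nat \<Rightarrow> real poly" where
  "qinteger i = (\<Sum>k<i. monom 1 k)"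

definition Pi_poly :: "nat list \<Rightarrow> real poly" where
  "Pi_poly mu =
    (\<Sum>w\<in>permutations_of_multiset (mset mu). \<Prod>i\<in>{1..sum_list mu} - suffix_sums w. qinteger i)"

lemma sum_in_Nats: "finite A \<Longrightarrow> (\<And>x. x \<in> A \<Longrightarrow> f x \<in> \<nat>) \<Longrightarrow> sum f A \<in> \<nat>"
  by (induction A rule: finite_induct) auto

lemma coeff_sum_in_Nats:
  "finite A \<Longrightarrow> (\<And>x. x \<in> A \<Longrightarrow> \<forall>i. coeff (p x) i \<in> \<nat>) \<Longrightarrow> \<forall>i. coeff (\<Sum>x\<in>A. p x) i \<in> \<nat>"
  by (simp add: coeff_sum sum_in_Nats)

lemma coeff_mult_in_Nats:
  "\<forall>i. coeff p i \<in> \<nat> \<Longrightarrow> \<forall>i. coeff q i \<in> \<nat> \<Longrightarrow> \<forall>i. coeff (p * q) i \<in> (\<nat> :: 'a::comm_semiring_1 set)"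
  by (simp add: coeff_mult sum_in_Nats)

lemma coeff_prod_in_Nats:
  "finite A \<Longrightarrow> (\<And>x. x \<in> A \<Longrightarrow> \<forall>i. coeff (p x) i \<in> \<nat>) \<Longrightarrow>
    \<forall>i. coeff (\<Prod>x\<in>A. p x) i \<in> (\<nat> :: 'a::comm_semiring_1 set)"
  by (induction A rule: finite_induct) (simp_all add: coeff_1 coeff_mult_in_Nats)

lemma coeff_Pi_poly_in_Nats: "\<forall>i. coeff (Pi_poly mu) i \<in> \<nat>"
  unfolding Pi_poly_def qinteger_def
  by (intro coeff_sum_in_Nats coeff_prod_in_Nats) (auto simp: coeff_monom)

lemma poly_qinteger: "poly (qinteger i) q = (\<Sum>k<i. q ^ k)"
  by (simp add: qinteger_def poly_sum poly_monom)

lemma suffix_term_times_qpoch: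
  fixes q :: real
  assumes q: "0 < q" "q < 1" and w: "0 \<notin> set w" "sum_list w = m"
  shows "comp_sign w / (\<Prod>u\<in>suffix_sums w. 1 - q ^ u) * qpoch q m =
    (q - 1) ^ (m - length w) * (\<Prod>i\<in>{1..m} - suffix_sums w. poly (qinteger i) q)"
proof -
  let ?C = "{1..m} - suffix_sums w"
  have sub: "suffix_sums w \<subseteq> {1..m}" and card: "card ?C = m - length w"
    using w suffix_sums_subset[of w] card_suffix_sums[of w] by (auto simp: card_Diff_subset)
  define D where "D = (\<Prod>u\<in>suffix_sums w. 1 - q ^ u)"
  have "0 < D"
    unfolding D_def using q sub by (intro prod_pos) (auto simp: power_less_one_iff subset_iff)
  moreover have "qpoch q m = (\<Prod>i\<in>?C. 1 - q ^ i) * D"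
    unfolding qpoch_def D_def by (rule prod.subset_diff[OF sub]) simp
  moreover have "comp_sign w = (-1) ^ card ?C"
    using w card by (simp add: comp_sign_def)
  ultimately have "comp_sign w / D * qpoch q m = (-1) ^ card ?C * (\<Prod>i\<in>?C. 1 - q ^ i)"
    by simp
  also have "\<dots> = (\<Prod>i\<in>?C. q ^ i - 1)"
    by (simp add: prod_uminus[symmetric])
  also have "\<dots> = (\<Prod>i\<in>?C. (q - 1) * poly (qinteger i) q)"
    by (simp add: poly_qinteger power_diff_1_eq)
  finally show ?thesis
    unfolding card[symmetric] D_def by (simp add: prod.distrib)
qed

lemma forgotten_qpoch_eq_Pi_poly:
  fixes q :: real
  assumes q: "0 < q" "q < 1" and mu: "mu \<in> partitions m"
  shows "forgotten mu (\<lambda>i. q ^ i) * qpoch q m = poly (Pi_poly mu) q * (q - 1) ^ (m - length mu)"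
proof -
  have m: "sum_list mu = m"
    using mu by (simp add: partitions_def)
  have "forgotten mu (\<lambda>i. q ^ i) * qpoch q m = (\<Sum>w\<in>permutations_of_multiset (mset mu).
      comp_sign w / (\<Prod>u\<in>suffix_sums w. 1 - q ^ u) * qpoch q m)"
    by (simp add: forgotten_qpowers[OF q mu] rearrangement_sum_def sum_distrib_right)
  also have "\<dots> = (\<Sum>w\<in>permutations_of_multiset (mset mu).
      (q - 1) ^ (m - length mu) * (\<Prod>i\<in>{1..m} - suffix_sums w. poly (qinteger i) q))"
  proof (intro sum.cong refl)
    fix w assume "w \<in> permutations_of_multiset (mset mu)"
    then have w: "mset w = mset mu"
      by (simp add: permutations_of_multiset_def)
    have "0 \<notin> set w"
      using mu set_mset_mset[of w] by (simp add: w partitions_def)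
    moreover have "sum_list w = m"
      using m sum_mset_sum_list[of w] by (simp add: w sum_mset_sum_list)
    moreover have "length w = length mu"
      using size_mset[of w] by (simp add: w)
    ultimately show "comp_sign w / (\<Prod>u\<in>suffix_sums w. 1 - q ^ u) * qpoch q m =
        (q - 1) ^ (m - length mu) * (\<Prod>i\<in>{1..m} - suffix_sums w. poly (qinteger i) q)"
      using suffix_term_times_qpoch[OF q] by simp
  qed
  also have "\<dots> = poly (Pi_poly mu) q * (q - 1) ^ (m - length mu)"
    by (simp add: Pi_poly_def poly_sum poly_prod m sum_distrib_left mult.commute)
  finally show ?thesis .
qed

theorem proposition1p1:
  fixes m :: nat and mu :: "nat list"
  assumes "m \<ge> 1" and "mu \<in> partitions m"
  shows "\<exists>P :: real poly. (\<forall>i. coeff P i \<in> \<nat>) \<and>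
     (\<forall>q::real. 0 < q \<and> q < 1 \<longrightarrow>
        forgotten mu (\<lambda>i. q ^ i) * qpoch q m = poly P q * (q - 1) ^ (m - length mu))"
proof (intro exI[of _ "Pi_poly mu"] conjI allI impI)
  show "coeff (Pi_poly mu) i \<in> \<nat>" for i
    using coeff_Pi_poly_in_Nats by blast
  fix q :: real assume "0 < q \<and> q < 1"
  then show "forgotten mu (\<lambda>i. q ^ i) * qpoch q m = poly (Pi_poly mu) q * (q - 1) ^ (m - length mu)"
    using forgotten_qpoch_eq_Pi_poly[OF _ _ assms(2)] by simp
qed

end
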